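(* Let $\mathbb{F}$ be a field and let $n,k$ be integers with $n>k>1$. Let $l$ be a positive integer such that $l<2^{n-k}$ and the binary decomposition of $l$ contains at most $k$ digits equal to $1$. Then there exists a unital $\mathbb{F}$-algebra $\mathcal{A}$ with $\dim\mathcal{A}=n$ and $l(\mathcal{A})=l$.
   Context: All algebras are finite-dimensional, unital, not necessarily associative algebras over the field $\mathbb{F}$. For a finite generating set $S$ of an algebra $\mathcal{A}$, a word in $S$ is any product (with any bracketing) of finitely many elements of $S$; its length is the number of factors, and $1$ is a word of length $0$. $L_i(S)$ is the linear span of all words in $S$ of length at most $i$. The length of $S$ is $l(S)=\min\{k\ge0: L_k(S)=\mathcal{A}\}$, and $l(\mathcal{A})=\max\{l(S): S\text{ a finite generating set of }\mathcal{A}\}$. *)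

theory Defs
  imports Main
begin

text \<open>An n-dimensional (not necessarily associative) algebra over a field 'f is
  represented by structure constants c: the carrier is F^n, realised as the functions
  nat => 'f vanishing outside {0..<n}; the product of basis vectors e_i e_j is
  (c i j k)_k.  Every finite-dimensional algebra is isomorphic to one of these.\<close>

definition carrier_n :: "nat \<Rightarrow> (nat \<Rightarrow> 'f::field) set" where
  "carrier_n n = {v. \<forall>i\<ge>n. v i = 0}"

definition sc_mult :: "nat \<Rightarrow> (nat \<Rightarrow> nat \<Rightarrow> nat \<Rightarrow> 'f::field)
    \<Rightarrow> (nat \<Rightarrow> 'f) \<Rightarrow> (nat \<Rightarrow> 'f) \<Rightarrow> (nat \<Rightarrow> 'f)" where
  "sc_mult n c x y = (\<lambda>k. if k < n then (\<Sum>i<n. \<Sum>j<n. x i * y j * c i j k) else 0)"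

definition is_unit_of :: "nat \<Rightarrow> (nat \<Rightarrow> nat \<Rightarrow> nat \<Rightarrow> 'f::field) \<Rightarrow> (nat \<Rightarrow> 'f) \<Rightarrow> bool" where
  "is_unit_of n c e \<longleftrightarrow> e \<in> carrier_n n \<and>
     (\<forall>x\<in>carrier_n n. sc_mult n c e x = x \<and> sc_mult n c x e = x)"

definition unital_sc :: "nat \<Rightarrow> (nat \<Rightarrow> nat \<Rightarrow> nat \<Rightarrow> 'f::field) \<Rightarrow> bool" where
  "unital_sc n c \<longleftrightarrow> (\<exists>e. is_unit_of n c e)"

definition lin_span :: "(nat \<Rightarrow> 'f::field) set \<Rightarrow> (nat \<Rightarrow> 'f) set" where
  "lin_span A = {v. \<exists>T a. finite T \<and> T \<subseteq> A \<and> v = (\<lambda>k. \<Sum>x\<in>T. a x * x k)}"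

text \<open>Words in S together with their length (number of factors); the unit e is the
  word of length 0; any bracketing is allowed.\<close>
inductive_set words :: "('v \<Rightarrow> 'v \<Rightarrow> 'v) \<Rightarrow> 'v \<Rightarrow> 'v set \<Rightarrow> ('v \<times> nat) set"
  for mul e S where
  w_one: "(e, 0) \<in> words mul e S"
| w_gen: "s \<in> S \<Longrightarrow> (s, 1) \<in> words mul e S"
| w_mul: "(x, a) \<in> words mul e S \<Longrightarrow> (y, b) \<in> words mul e S \<Longrightarrow> (mul x y, a + b) \<in> words mul e S"

definition L_sc :: "nat \<Rightarrow> (nat \<Rightarrow> nat \<Rightarrow> nat \<Rightarrow> 'f::field) \<Rightarrow> (nat \<Rightarrow> 'f) \<Rightarrow> (nat \<Rightarrow> 'f) set
    \<Rightarrow> nat \<Rightarrow> (nat \<Rightarrow> 'f) set" where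
  "L_sc n c e S i = lin_span {x. \<exists>j\<le>i. (x, j) \<in> words (sc_mult n c) e S}"

definition generating_sc :: "nat \<Rightarrow> (nat \<Rightarrow> nat \<Rightarrow> nat \<Rightarrow> 'f::field) \<Rightarrow> (nat \<Rightarrow> 'f) \<Rightarrow> (nat \<Rightarrow> 'f) set \<Rightarrow> bool" where
  "generating_sc n c e S \<longleftrightarrow> finite S \<and> S \<subseteq> carrier_n n \<and> (\<Union>i. L_sc n c e S i) = carrier_n n"

definition length_set_sc :: "nat \<Rightarrow> (nat \<Rightarrow> nat \<Rightarrow> nat \<Rightarrow> 'f::field) \<Rightarrow> (nat \<Rightarrow> 'f) \<Rightarrow> (nat \<Rightarrow> 'f) set \<Rightarrow> nat" where
  "length_set_sc n c e S = (LEAST k. L_sc n c e S k = carrier_n n)"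

definition algebra_length_is :: "nat \<Rightarrow> (nat \<Rightarrow> nat \<Rightarrow> nat \<Rightarrow> 'f::field) \<Rightarrow> nat \<Rightarrow> bool" where
  "algebra_length_is n c m \<longleftrightarrow> (\<exists>e. is_unit_of n c e \<and>
     (\<exists>S. generating_sc n c e S \<and> length_set_sc n c e S = m) \<and>
     (\<forall>S. generating_sc n c e S \<longrightarrow> length_set_sc n c e S \<le> m))"

fun ones_count :: "nat \<Rightarrow> nat" where
  "ones_count m = (if m = 0 then 0 else m mod 2 + ones_count (m div 2))"

declare ones_count.simps[simp del]

end

theory Submission
  imports Defs "HOL-Library.Function_Algebras" HOL.Modules
begin

text \<open>
  Binary expansion gives a chain 1 = v_1, ..., v_m = l in which each term is twice or one
  more than its predecessor, with m < n when l < 2^(n-k) has at most k ones.  On the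
  basis e_0 = 1, e_1, ..., e_(n-1) put e_(t-1) e_(t-1) = e_t at a doubling step and
  e_(t-1) e_1 = e_t at an increment, all other products of non-unit basis vectors being 0.
  Giving e_t weight v_t (and the spare basis vectors weight 1) makes the algebra graded
  with top weight l, and every basis vector of weight at least 2 is a product of two of
  smaller positive weight.

  For such a graded algebra the length is the top weight.  The weight-one basis vectors
  generate, and their words of length j are homogeneous of weight j, so they need exactly
  l factors.  Conversely, once the unit components of a generating set S are removed,
  words of length j lie in the ideal of elements of weight at least j.  Hence every
  weight-one basis vector lies in L_1(S) modulo weight 2, induction on the weight puts
  each e_t into L_(wt t)(S) modulo higher weights, and downward induction puts it into L_l(S).
\<close>

definition fscale :: "'f::field \<Rightarrow> (nat \<Rightarrow> 'f) \<Rightarrow> nat \<Rightarrow> 'f" where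
  "fscale a v = (\<lambda>k. a * v k)"

interpretation V: module "fscale :: 'f::field \<Rightarrow> (nat \<Rightarrow> 'f) \<Rightarrow> nat \<Rightarrow> 'f"
  by standard (auto simp: fscale_def algebra_simps)

lemma sum_fun_apply: "(\<Sum>x\<in>T. f x) k = (\<Sum>x\<in>T. f x k)"
  by (induct T rule: infinite_finite_induct) auto

lemma lin_span_eq_span: "lin_span A = V.span A"
  unfolding lin_span_def V.span_explicit
  by (auto simp: sum_fun_apply fscale_def fun_eq_iff)

lemma subspace_carrier_n: "V.subspace (carrier_n n)"
  unfolding V.subspace_def carrier_n_def fscale_def by auto

lemma sc_mult_carrier: "sc_mult n c x y \<in> carrier_n n"
  unfolding sc_mult_def carrier_n_def by auto

lemma sc_mult_add_left: "sc_mult n c (x + y) z = sc_mult n c x z + sc_mult n c y z"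
  unfolding sc_mult_def by (auto simp: algebra_simps sum.distrib)

lemma sc_mult_add_right: "sc_mult n c z (x + y) = sc_mult n c z x + sc_mult n c z y"
  unfolding sc_mult_def by (auto simp: algebra_simps sum.distrib)

lemma sc_mult_scale_left: "sc_mult n c (fscale a x) z = fscale a (sc_mult n c x z)"
  unfolding sc_mult_def fscale_def by (auto simp: algebra_simps sum_distrib_left)

lemma sc_mult_scale_right: "sc_mult n c z (fscale a x) = fscale a (sc_mult n c z x)"
  unfolding sc_mult_def fscale_def by (auto simp: algebra_simps sum_distrib_left)

lemma sc_mult_zero_left: "sc_mult n c 0 z = 0"
  unfolding sc_mult_def by auto

lemma sc_mult_zero_right: "sc_mult n c z 0 = 0"
  unfolding sc_mult_def by auto

lemma sc_mult_nonzero_obtain: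
  assumes "sc_mult n c x y k \<noteq> 0"
  obtains i j where "i < n" "j < n" "k < n" "x i \<noteq> 0" "y j \<noteq> 0" "c i j k \<noteq> 0"
proof -
  from assms have "k < n" and "(\<Sum>i<n. \<Sum>j<n. x i * y j * c i j k) \<noteq> 0"
    unfolding sc_mult_def by (auto split: if_splits)
  then obtain i j where "i < n" "j < n" "x i * y j * c i j k \<noteq> 0"
    by (meson lessThan_iff sum.neutral)
  with \<open>k < n\<close> show thesis using that by simp
qed


definition words_upto :: "nat \<Rightarrow> (nat \<Rightarrow> nat \<Rightarrow> nat \<Rightarrow> 'f::field) \<Rightarrow> (nat \<Rightarrow> 'f)
    \<Rightarrow> (nat \<Rightarrow> 'f) set \<Rightarrow> nat \<Rightarrow> (nat \<Rightarrow> 'f) set"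
  where "words_upto n c e S i = {x. \<exists>j\<le>i. (x, j) \<in> words (sc_mult n c) e S}"

lemma L_sc_eq_span: "L_sc n c e S i = V.span (words_upto n c e S i)"
  unfolding L_sc_def words_upto_def lin_span_eq_span ..

lemma subspace_L_sc: "V.subspace (L_sc n c e S i)"
  unfolding L_sc_eq_span by simp

lemma L_sc_mono: "i \<le> j \<Longrightarrow> L_sc n c e S i \<subseteq> L_sc n c e S j"
  unfolding L_sc_eq_span words_upto_def by (intro V.span_mono) (auto intro: order_trans)

lemma word_in_L_sc: "(x, i) \<in> words (sc_mult n c) e S \<Longrightarrow> x \<in> L_sc n c e S i"
  unfolding L_sc_eq_span words_upto_def by (intro V.span_base) auto

lemma unit_in_L_sc: "e \<in> L_sc n c e S i"
  using word_in_L_sc[OF words.w_one] L_sc_mono[of 0 i] by blast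

lemma generator_in_L_sc: "s \<in> S \<Longrightarrow> 0 < i \<Longrightarrow> s \<in> L_sc n c e S i"
  using word_in_L_sc[OF words.w_gen] L_sc_mono[of 1 i] by fastforce

lemma L_sc_mult:
  assumes "x \<in> L_sc n c e S a" "y \<in> L_sc n c e S b"
  shows "sc_mult n c x y \<in> L_sc n c e S (a + b)"
proof -
  let ?L = "L_sc n c e S (a + b)"
  have word_right: "sc_mult n c x y \<in> ?L"
    if "x \<in> words_upto n c e S a" "y \<in> V.span (words_upto n c e S b)" for x y
    using that(2)
  proof (induct rule: V.span_induct)
    case base
    show ?case
      by (rule V.subspaceI)
        (auto simp: sc_mult_zero_right sc_mult_add_right sc_mult_scale_right
          intro: V.subspace_0 V.subspace_add V.subspace_scale subspace_L_sc)
  next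
    case (step y)
    with that(1) obtain i j where "i \<le> a" "j \<le> b"
      "(x, i) \<in> words (sc_mult n c) e S" "(y, j) \<in> words (sc_mult n c) e S"
      unfolding words_upto_def by auto
    then show ?case
      using word_in_L_sc[OF words.w_mul] L_sc_mono[of "i + j" "a + b"] by fastforce
  qed
  have "\<forall>y\<in>L_sc n c e S b. sc_mult n c x y \<in> ?L"
    using assms(1) unfolding L_sc_eq_span
  proof (induct rule: V.span_induct)
    case base
    show ?case
      by (rule V.subspaceI)
        (auto simp: sc_mult_zero_left sc_mult_add_left sc_mult_scale_left
          intro: V.subspace_0 V.subspace_add V.subspace_scale subspace_L_sc)
  qed (use word_right in \<open>auto simp: L_sc_eq_span\<close>)
  with assms(2) show ?thesis by blast
qed

lemma L_sc_subset_L_sc: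
  assumes "S \<subseteq> L_sc n c e T 1"
  shows "L_sc n c e S j \<subseteq> L_sc n c e T j"
proof -
  have "x \<in> L_sc n c e T i" if "(x, i) \<in> words (sc_mult n c) e S" for x i
    using that
  proof (induct rule: words.induct)
    case (w_mul x a y b)
    from w_mul.hyps(2,4) show ?case by (rule L_sc_mult)
  qed (use assms unit_in_L_sc in auto)
  then have "words_upto n c e S j \<subseteq> L_sc n c e T j"
    unfolding words_upto_def using L_sc_mono by blast
  then show ?thesis
    unfolding L_sc_eq_span[of n c e S] by (rule V.span_minimal[OF _ subspace_L_sc])
qed

lemma L_sc_subset_carrier:
  assumes "S \<subseteq> carrier_n n" "e \<in> carrier_n n"
  shows "L_sc n c e S i \<subseteq> carrier_n n"
proof -
  have "x \<in> carrier_n n" if "(x, j) \<in> words (sc_mult n c) e S" for x j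
    using that by induct (use assms sc_mult_carrier in auto)
  then show ?thesis
    unfolding L_sc_eq_span words_upto_def
    by (intro V.span_minimal subspace_carrier_n) auto
qed


definition basis_vec :: "nat \<Rightarrow> nat \<Rightarrow> 'f::field" where
  "basis_vec t = (\<lambda>k. if k = t then 1 else 0)"

lemma basis_vec_carrier: "t < n \<Longrightarrow> basis_vec t \<in> carrier_n n"
  unfolding basis_vec_def carrier_n_def by auto

lemma sc_mult_basis_vec:
  assumes "a < n" "b < n"
  shows "sc_mult n c (basis_vec a) (basis_vec b) = (\<lambda>k. if k < n then c a b k else 0)"
  using assms unfolding sc_mult_def basis_vec_def
  by (simp add: if_distrib[of "\<lambda>x. x * _"] if_distrib[of "\<lambda>x. _ * x"] sum.delta
      sum.swap[of _ "{..<n}"] cong: if_cong)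

lemma in_subspace_if_basis_vecs_in:
  assumes P: "V.subspace P" and v: "v \<in> carrier_n n"
    and basis: "\<And>s. s < n \<Longrightarrow> v s \<noteq> 0 \<Longrightarrow> basis_vec s \<in> P"
  shows "v \<in> P"
proof -
  have "v = (\<Sum>s<n. fscale (v s) (basis_vec s))"
  proof
    fix k
    show "v k = (\<Sum>s<n. fscale (v s) (basis_vec s)) k"
      using v unfolding sum_fun_apply fscale_def basis_vec_def carrier_n_def
      by (cases "k < n") (auto simp: if_distrib cong: if_cong)
  qed
  also have "\<dots> \<in> P"
  proof (rule V.subspace_sum[OF P])
    fix s assume "s \<in> {..<n}"
    then show "fscale (v s) (basis_vec s) \<in> P"
      using basis[of s] V.subspace_0[OF P] V.subspace_scale[OF P] by (cases "v s = 0") auto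
  qed
  finally show ?thesis .
qed


locale graded_sc_algebra =
  fixes n :: nat and c :: "nat \<Rightarrow> nat \<Rightarrow> nat \<Rightarrow> 'f::field" and wt :: "nat \<Rightarrow> nat" and M :: nat
  assumes n_pos: "0 < n"
    and unit_left: "\<And>j k. j < n \<Longrightarrow> k < n \<Longrightarrow> c 0 j k = (if j = k then 1 else 0)"
    and unit_right: "\<And>i k. i < n \<Longrightarrow> k < n \<Longrightarrow> c i 0 k = (if i = k then 1 else 0)"
    and graded: "\<And>i j k. i < n \<Longrightarrow> j < n \<Longrightarrow> k < n \<Longrightarrow> c i j k \<noteq> 0 \<Longrightarrow> wt k = wt i + wt j"
    and wt_unit: "wt 0 = 0"
    and wt_range: "\<And>t. 0 < t \<Longrightarrow> t < n \<Longrightarrow> 1 \<le> wt t \<and> wt t \<le> M"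
    and wt_top: "\<exists>t<n. wt t = M"
    and decomposable: "\<And>t. 0 < t \<Longrightarrow> t < n \<Longrightarrow> 2 \<le> wt t \<Longrightarrow>
      \<exists>a b. 0 < a \<and> a < n \<and> 0 < b \<and> b < n \<and> wt a + wt b = wt t
        \<and> sc_mult n c (basis_vec a) (basis_vec b) = basis_vec t"
begin

abbreviation mul where "mul \<equiv> sc_mult n c"
abbreviation e where "e \<equiv> (basis_vec 0 :: nat \<Rightarrow> 'f)"

lemma unit_carrier: "e \<in> carrier_n n"
  using basis_vec_carrier n_pos by blast

lemma is_unit: "is_unit_of n c e"
proof -
  have "mul e x k = x k \<and> mul x e k = x k" if "x \<in> carrier_n n" for x k
  proof (cases "k < n")
    case True
    then have "mul e x k = (\<Sum>j<n. x j * c 0 j k)" "mul x e k = (\<Sum>i<n. x i * c i 0 k)"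
      using n_pos unfolding sc_mult_def basis_vec_def
      by (simp_all add: if_distrib[of "\<lambda>a. a * _"] if_distrib[of "\<lambda>a. _ * a"] sum.delta
          sum.swap[of _ "{..<n}"] cong: if_cong)
    with True show ?thesis by (simp add: unit_left unit_right if_distrib cong: if_cong)
  next
    case False
    with that show ?thesis unfolding sc_mult_def carrier_n_def by auto
  qed
  then show ?thesis unfolding is_unit_of_def using unit_carrier by auto
qed

lemma unit_mult [simp]: "x \<in> carrier_n n \<Longrightarrow> mul e x = x" "x \<in> carrier_n n \<Longrightarrow> mul x e = x"
  using is_unit unfolding is_unit_of_def by auto

definition weight_ge :: "nat \<Rightarrow> (nat \<Rightarrow> 'f) set" where
  "weight_ge d = {v \<in> carrier_n n. \<forall>t. v t \<noteq> 0 \<longrightarrow> 0 < t \<and> d \<le> wt t}"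

lemma weight_ge_carrier: "weight_ge d \<subseteq> carrier_n n"
  unfolding weight_ge_def by auto

lemma subspace_weight_ge: "V.subspace (weight_ge d)"
  unfolding V.subspace_def weight_ge_def carrier_n_def fscale_def
  by (auto, (metis add.right_neutral)+)

lemma weight_ge_antimono: "d \<le> d' \<Longrightarrow> weight_ge d' \<subseteq> weight_ge d"
  unfolding weight_ge_def by auto

lemma weight_ge_mult:
  assumes "x \<in> weight_ge a" "y \<in> weight_ge b"
  shows "mul x y \<in> weight_ge (a + b)"
proof -
  have "0 < k \<and> a + b \<le> wt k" if "mul x y k \<noteq> 0" for k
  proof -
    obtain i j where ij: "i < n" "j < n" "k < n" "x i \<noteq> 0" "y j \<noteq> 0" "c i j k \<noteq> 0"
      using sc_mult_nonzero_obtain[OF \<open>mul x y k \<noteq> 0\<close>] .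
    with assms have "0 < i" "a \<le> wt i" "b \<le> wt j" unfolding weight_ge_def by auto
    moreover have "wt k = wt i + wt j" using graded ij by blast
    moreover have "1 \<le> wt i" using wt_range \<open>0 < i\<close> ij by blast
    ultimately show ?thesis using wt_unit by (cases "k = 0") auto
  qed
  then show ?thesis unfolding weight_ge_def using sc_mult_carrier by auto
qed

lemma basis_vec_in_weight_ge: "0 < t \<Longrightarrow> t < n \<Longrightarrow> basis_vec t \<in> weight_ge (wt t)"
  unfolding weight_ge_def basis_vec_def carrier_n_def by auto

lemma carrier_minus_unit_part:
  assumes "x \<in> carrier_n n"
  shows "x - fscale (x 0) e \<in> weight_ge 1"
proof -
  have "0 < t \<and> 1 \<le> wt t" if "(x - fscale (x 0) e) t \<noteq> 0" for t
  proof -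
    from that have "t \<noteq> 0" "x t \<noteq> 0" by (auto simp: fscale_def basis_vec_def split: if_splits)
    moreover from \<open>x t \<noteq> 0\<close> assms have "t < n" unfolding carrier_n_def using leI by blast
    ultimately show ?thesis using wt_range by auto
  qed
  moreover have "x - fscale (x 0) e \<in> carrier_n n"
    using assms unit_carrier V.subspace_diff[OF subspace_carrier_n] V.subspace_scale[OF subspace_carrier_n]
    by blast
  ultimately show ?thesis unfolding weight_ge_def by blast
qed

lemma words_in_weight_ge:
  assumes "S \<subseteq> weight_ge 1" "(x, j) \<in> words mul e S"
  shows "x = e \<and> j = 0 \<or> 0 < j \<and> x \<in> weight_ge j"
  using assms(2)
proof induct
  case (w_mul x a y b)
  have "x \<in> carrier_n n" "y \<in> carrier_n n"
    using w_mul.hyps(2,4) unit_carrier weight_ge_carrier by auto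
  with w_mul.hyps(2,4) weight_ge_mult[of x a y b] show ?case by auto
qed (use assms(1) in auto)

lemma L_sc_subset_L1_plus_weight_ge_2:
  assumes "S \<subseteq> weight_ge 1"
  shows "L_sc n c e S i \<subseteq> {u + f |u f. u \<in> L_sc n c e S 1 \<and> f \<in> weight_ge 2}"
proof -
  have "words_upto n c e S i \<subseteq> L_sc n c e S 1 \<union> weight_ge 2"
  proof
    fix x assume "x \<in> words_upto n c e S i"
    then obtain j where word: "(x, j) \<in> words mul e S" unfolding words_upto_def by blast
    show "x \<in> L_sc n c e S 1 \<union> weight_ge 2"
    proof (cases "j \<le> 1")
      case True
      then show ?thesis using word_in_L_sc[OF word] L_sc_mono by blast
    next
      case False
      then show ?thesis using words_in_weight_ge[OF assms word] weight_ge_antimono[of 2 j] by auto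
    qed
  qed
  then have "L_sc n c e S i \<subseteq> V.span (L_sc n c e S 1 \<union> weight_ge 2)"
    unfolding L_sc_eq_span[of _ _ _ _ i] by (rule V.span_mono)
  also have "\<dots> = {u + f |u f. u \<in> L_sc n c e S 1 \<and> f \<in> weight_ge 2}"
    unfolding V.span_Un by (simp add: V.span_eq_iff[THEN iffD2] subspace_L_sc subspace_weight_ge)
  finally show ?thesis .
qed

lemma approximant_in_weight_ge:
  assumes "0 < t" "t < n" "basis_vec t = u + f" "f \<in> weight_ge (Suc (wt t))"
  shows "u \<in> weight_ge (wt t)"
proof -
  have "u = basis_vec t - f" using assms(3) by simp
  moreover have "f \<in> weight_ge (wt t)" using assms(4) weight_ge_antimono[of "wt t" "Suc (wt t)"] by auto
  ultimately show ?thesis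
    using basis_vec_in_weight_ge[OF assms(1,2)] V.subspace_diff[OF subspace_weight_ge] by simp
qed

definition in_L_mod_higher :: "(nat \<Rightarrow> 'f) set \<Rightarrow> nat \<Rightarrow> bool" where
  "in_L_mod_higher S t \<longleftrightarrow>
     (\<exists>u f. u \<in> L_sc n c e S (wt t) \<and> f \<in> weight_ge (Suc (wt t)) \<and> basis_vec t = u + f)"

text \<open>Induction on the weight: if e_t = e_a e_b with e_a = u_a + f_a and e_b = u_b + f_b,
  then e_t = u_a u_b up to terms of weight above wt a + wt b.\<close>

lemma in_L_mod_higher_if_weight_one:
  assumes weight_one: "\<And>t. 0 < t \<Longrightarrow> t < n \<Longrightarrow> wt t = 1 \<Longrightarrow> in_L_mod_higher S t"
  shows "0 < t \<Longrightarrow> t < n \<Longrightarrow> in_L_mod_higher S t"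
proof (induct "wt t" arbitrary: t rule: less_induct)
  case less
  show ?case
  proof (cases "wt t = 1")
    case True
    then show ?thesis using weight_one[OF less.prems] by simp
  next
    case False
    then have "2 \<le> wt t" using wt_range[OF less.prems] by auto
    then obtain a b where ab: "0 < a" "a < n" "0 < b" "b < n" "wt a + wt b = wt t"
      and prod: "mul (basis_vec a) (basis_vec b) = basis_vec t"
      using decomposable less.prems by blast
    have "wt a < wt t" "wt b < wt t" using wt_range[of a] wt_range[of b] ab by auto
    obtain ua fa where
      a: "ua \<in> L_sc n c e S (wt a)" "fa \<in> weight_ge (Suc (wt a))" "basis_vec a = ua + fa"
      using less.hyps[of a] \<open>wt a < wt t\<close> ab unfolding in_L_mod_higher_def by blast
    obtain ub fb where
      b: "ub \<in> L_sc n c e S (wt b)" "fb \<in> weight_ge (Suc (wt b))" "basis_vec b = ub + fb"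
      using less.hyps[of b] \<open>wt b < wt t\<close> ab unfolding in_L_mod_higher_def by blast
    have "basis_vec t = mul ua ub + (mul ua fb + mul fa ub + mul fa fb)"
      using prod a(3) b(3) by (simp add: sc_mult_add_left sc_mult_add_right algebra_simps)
    moreover have "mul ua ub \<in> L_sc n c e S (wt t)"
      using L_sc_mult[OF a(1) b(1)] ab(5) by simp
    moreover have "mul ua fb + mul fa ub + mul fa fb \<in> weight_ge (Suc (wt t))"
    proof -
      have "mul ua fb \<in> weight_ge (Suc (wt t))" "mul fa ub \<in> weight_ge (Suc (wt t))"
        using weight_ge_mult[OF approximant_in_weight_ge[OF ab(1,2) a(3,2)] b(2)]
          weight_ge_mult[OF a(2) approximant_in_weight_ge[OF ab(3,4) b(3,2)]] ab(5) by simp_all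
      moreover have "mul fa fb \<in> weight_ge (Suc (wt t))"
        using weight_ge_mult[OF a(2) b(2)] weight_ge_antimono[of "Suc (wt t)" "Suc (Suc (wt t))"] ab(5)
        by auto
      ultimately show ?thesis by (intro V.subspace_add[OF subspace_weight_ge])
    qed
    ultimately show ?thesis unfolding in_L_mod_higher_def by blast
  qed
qed

lemma basis_vec_in_L_top:
  assumes weight_one: "\<And>t. 0 < t \<Longrightarrow> t < n \<Longrightarrow> wt t = 1 \<Longrightarrow> in_L_mod_higher S t"
  shows "0 < t \<Longrightarrow> t < n \<Longrightarrow> basis_vec t \<in> L_sc n c e S M"
proof (induct "M - wt t" arbitrary: t rule: less_induct)
  case less
  obtain u f where
    uf: "u \<in> L_sc n c e S (wt t)" "f \<in> weight_ge (Suc (wt t))" "basis_vec t = u + f"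
    using in_L_mod_higher_if_weight_one[OF weight_one less.prems]
    unfolding in_L_mod_higher_def by blast
  have "u \<in> L_sc n c e S M" using uf(1) L_sc_mono wt_range[OF less.prems] by blast
  moreover have "f \<in> L_sc n c e S M"
  proof (rule in_subspace_if_basis_vecs_in[OF subspace_L_sc])
    show "f \<in> carrier_n n" using uf(2) weight_ge_carrier by blast
  next
    fix s assume "s < n" "f s \<noteq> 0"
    then have "0 < s" "wt t < wt s" using uf(2) unfolding weight_ge_def by auto
    moreover have "wt s \<le> M" using wt_range \<open>0 < s\<close> \<open>s < n\<close> by blast
    ultimately show "basis_vec s \<in> L_sc n c e S M" using less.hyps \<open>s < n\<close> by simp
  qed
  ultimately show ?case using uf(3) V.subspace_add[OF subspace_L_sc] by simp
qed

lemma L_top_eq_carrier: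
  assumes "S \<subseteq> carrier_n n"
    and weight_one: "\<And>t. 0 < t \<Longrightarrow> t < n \<Longrightarrow> wt t = 1 \<Longrightarrow> in_L_mod_higher S t"
  shows "L_sc n c e S M = carrier_n n"
proof
  show "L_sc n c e S M \<subseteq> carrier_n n"
    using L_sc_subset_carrier[OF assms(1) unit_carrier] .
  show "carrier_n n \<subseteq> L_sc n c e S M"
    using in_subspace_if_basis_vecs_in[OF subspace_L_sc] basis_vec_in_L_top[OF weight_one]
      unit_in_L_sc by (metis gr0I subsetI)
qed

text \<open>Subtracting unit components does not change any L_i, and moves the generators into
  the augmentation ideal weight_ge 1.\<close>

lemma length_set_sc_le_top:
  assumes gen: "generating_sc n c e S"
  shows "length_set_sc n c e S \<le> M"
proof -
  define S' where "S' = (\<lambda>s. s - fscale (s 0) e) ` S"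
  have S_carrier: "S \<subseteq> carrier_n n" using gen unfolding generating_sc_def by blast
  have S'_weight_ge: "S' \<subseteq> weight_ge 1"
    unfolding S'_def using S_carrier carrier_minus_unit_part by blast
  have unit_part: "fscale a e \<in> L_sc n c e T 1" for a and T :: "(nat \<Rightarrow> 'f) set"
    using unit_in_L_sc V.subspace_scale[OF subspace_L_sc] by blast
  have "S' \<subseteq> L_sc n c e S 1"
  proof
    fix x assume "x \<in> S'"
    then obtain s where "s \<in> S" "x = s - fscale (s 0) e" unfolding S'_def by blast
    then show "x \<in> L_sc n c e S 1"
      using V.subspace_diff[OF subspace_L_sc generator_in_L_sc[of s S 1] unit_part] by simp
  qed
  moreover have "S \<subseteq> L_sc n c e S' 1"
  proof
    fix s assume "s \<in> S"
    then have "s - fscale (s 0) e \<in> L_sc n c e S' 1"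
      unfolding S'_def by (intro generator_in_L_sc) auto
    then show "s \<in> L_sc n c e S' 1"
      using V.subspace_add[OF subspace_L_sc _ unit_part[of "s 0"]] by fastforce
  qed
  ultimately have L_eq: "L_sc n c e S i = L_sc n c e S' i" for i
    using L_sc_subset_L_sc by blast
  have "L_sc n c e S' M = carrier_n n"
  proof (rule L_top_eq_carrier)
    show "S' \<subseteq> carrier_n n" using S'_weight_ge weight_ge_carrier by blast
    fix t assume "0 < t" "t < n" "wt t = 1"
    then obtain i where "basis_vec t \<in> L_sc n c e S i"
      using gen basis_vec_carrier unfolding generating_sc_def by blast
    then have "\<exists>u f. u \<in> L_sc n c e S' 1 \<and> f \<in> weight_ge 2 \<and> basis_vec t = u + f"
      using L_eq L_sc_subset_L1_plus_weight_ge_2[OF S'_weight_ge] by blast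
    with \<open>wt t = 1\<close> show "in_L_mod_higher S' t"
      unfolding in_L_mod_higher_def by (simp add: numeral_2_eq_2)
  qed
  then show ?thesis unfolding length_set_sc_def L_eq by (rule Least_le)
qed

definition homogeneous :: "nat \<Rightarrow> (nat \<Rightarrow> 'f) set" where
  "homogeneous d = {v. \<forall>t<n. v t \<noteq> 0 \<longrightarrow> wt t = d}"

lemma homogeneous_mult:
  assumes "x \<in> homogeneous a" "y \<in> homogeneous b"
  shows "mul x y \<in> homogeneous (a + b)"
proof -
  have "wt k = a + b" if nonzero: "mul x y k \<noteq> 0" for k
  proof -
    obtain i j where "i < n" "j < n" "k < n" "x i \<noteq> 0" "y j \<noteq> 0" "c i j k \<noteq> 0"
      using sc_mult_nonzero_obtain[OF nonzero] .
    with assms graded show ?thesis unfolding homogeneous_def by auto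
  qed
  then show ?thesis unfolding homogeneous_def by blast
qed

definition weight_one_basis :: "(nat \<Rightarrow> 'f) set" where
  "weight_one_basis = basis_vec ` {t. 0 < t \<and> t < n \<and> wt t = 1}"

lemma weight_one_basis_words_homogeneous:
  "(x, j) \<in> words mul e weight_one_basis \<Longrightarrow> x \<in> homogeneous j"
proof (induct rule: words.induct)
  case w_one
  then show ?case unfolding homogeneous_def basis_vec_def using wt_unit by auto
next
  case (w_gen s)
  then obtain t where "s = basis_vec t" "wt t = 1" unfolding weight_one_basis_def by blast
  then show ?case unfolding homogeneous_def basis_vec_def by simp
next
  case (w_mul x a y b)
  from w_mul.hyps(2,4) show ?case by (rule homogeneous_mult)
qed

lemma weight_one_basis_weight_ge: "weight_one_basis \<subseteq> weight_ge 1"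
proof
  fix x assume "x \<in> weight_one_basis"
  then obtain t where "0 < t" "t < n" "wt t = 1" "x = basis_vec t"
    unfolding weight_one_basis_def by blast
  then show "x \<in> weight_ge 1" using basis_vec_in_weight_ge[of t] by simp
qed

lemma L_top_weight_one_basis: "L_sc n c e weight_one_basis M = carrier_n n"
proof (rule L_top_eq_carrier)
  show "weight_one_basis \<subseteq> carrier_n n"
    using weight_one_basis_weight_ge weight_ge_carrier by blast
  fix t assume "0 < t" "t < n" "wt t = 1"
  then have "basis_vec t \<in> L_sc n c e weight_one_basis 1"
    unfolding weight_one_basis_def by (intro generator_in_L_sc) auto
  then show "in_L_mod_higher weight_one_basis t"
    unfolding in_L_mod_higher_def using \<open>wt t = 1\<close>
    by (intro exI[of _ "basis_vec t"] exI[of _ 0]) (simp add: V.subspace_0[OF subspace_weight_ge])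
qed

lemma generating_weight_one_basis: "generating_sc n c e weight_one_basis"
proof -
  have "weight_one_basis \<subseteq> carrier_n n"
    using weight_one_basis_weight_ge weight_ge_carrier by blast
  then have "(\<Union>i. L_sc n c e weight_one_basis i) = carrier_n n"
    using L_top_weight_one_basis L_sc_subset_carrier[OF _ unit_carrier] by blast
  moreover have "finite weight_one_basis" unfolding weight_one_basis_def by simp
  ultimately show ?thesis unfolding generating_sc_def using \<open>weight_one_basis \<subseteq> carrier_n n\<close> by blast
qed

lemma length_set_sc_weight_one_basis: "length_set_sc n c e weight_one_basis = M"
  unfolding length_set_sc_def
proof (rule Least_equality)
  show "L_sc n c e weight_one_basis M = carrier_n n" by (rule L_top_weight_one_basis)
next
  fix k assume full: "L_sc n c e weight_one_basis k = carrier_n n"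
  obtain top where top: "top < n" "wt top = M" using wt_top by blast
  show "M \<le> k"
  proof (rule ccontr)
    assume "\<not> M \<le> k"
    have "words_upto n c e weight_one_basis k \<subseteq> {v. v top = 0}"
    proof
      fix x assume "x \<in> words_upto n c e weight_one_basis k"
      then obtain j where "j \<le> k" "(x, j) \<in> words mul e weight_one_basis"
        unfolding words_upto_def by blast
      then have "x \<in> homogeneous j" "j \<noteq> M"
        using weight_one_basis_words_homogeneous \<open>\<not> M \<le> k\<close> by auto
      then show "x \<in> {v. v top = 0}" using top unfolding homogeneous_def by auto
    qed
    then have "L_sc n c e weight_one_basis k \<subseteq> {v. v top = 0}"
      unfolding L_sc_eq_span
      by (rule V.span_minimal) (auto simp: V.subspace_def fscale_def)
    then show False
      using full basis_vec_carrier[OF top(1)] by (auto simp: basis_vec_def)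
  qed
qed

theorem unital_and_length: "unital_sc n c \<and> algebra_length_is n c M"
  unfolding unital_sc_def algebra_length_is_def
  using is_unit generating_weight_one_basis length_set_sc_weight_one_basis
    length_set_sc_le_top by blast

end


definition binary_chain :: "(nat \<Rightarrow> nat) \<Rightarrow> nat \<Rightarrow> bool" where
  "binary_chain v m \<longleftrightarrow> 1 \<le> m \<and> v 1 = 1 \<and>
     (\<forall>i. 1 \<le> i \<longrightarrow> i < m \<longrightarrow> v (Suc i) = 2 * v i \<or> v (Suc i) = Suc (v i))"

lemma binary_chain_snoc:
  assumes "binary_chain v m" "w = 2 * v m \<or> w = Suc (v m)"
  shows "binary_chain (v(Suc m := w)) (Suc m)"
  using assms unfolding binary_chain_def by (auto simp: less_Suc_eq)

lemma binary_chain_exists: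
  "0 < l \<Longrightarrow> l < 2 ^ p \<Longrightarrow> ones_count l \<le> q \<Longrightarrow>
     \<exists>v m. binary_chain v m \<and> m < p + q \<and> v m = l"
proof (induct l arbitrary: p q rule: less_induct)
  case (less l)
  show ?case
  proof (cases "l = 1")
    case True
    have "p \<noteq> 0" using less.prems(2) True by (cases p) auto
    moreover have "1 \<le> q" using less.prems(3) True by (simp add: ones_count.simps)
    ultimately show ?thesis using True
      by (intro exI[of _ "\<lambda>_. 1"] exI[of _ 1]) (auto simp: binary_chain_def)
  next
    case False
    with less.prems(1) have "2 \<le> l" by simp
    with less.prems(2) obtain p' where p: "p = Suc p'" by (cases p) auto
    have half: "0 < l div 2" "l div 2 < l" "l div 2 < 2 ^ p'"
      using \<open>2 \<le> l\<close> less.prems(2) p by auto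
    have ones: "ones_count l = l mod 2 + ones_count (l div 2)"
      using \<open>2 \<le> l\<close> by (subst ones_count.simps) simp
    show ?thesis
    proof (cases "even l")
      case True
      with ones less.prems(3) have "ones_count (l div 2) \<le> q" by simp
      then obtain v m where v: "binary_chain v m" "m < p' + q" "v m = l div 2"
        using less.hyps[OF half(2,1,3)] by blast
      define w where "w = v(Suc m := l)"
      have "binary_chain w (Suc m)" "w (Suc m) = l"
        using binary_chain_snoc[OF v(1)] v(3) True unfolding w_def by simp_all
      with v(2) p show ?thesis by (intro exI[of _ w] exI[of _ "Suc m"]) simp
    next
      case False
      then have "l mod 2 = 1" by presburger
      with ones less.prems(3) have "ones_count (l div 2) \<le> q - 1" "1 \<le> q" by auto
      then obtain v m where v: "binary_chain v m" "m < p' + (q - 1)" "v m = l div 2"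
        using less.hyps[OF half(2,1,3)] by blast
      define w where "w = v(Suc m := 2 * (l div 2), Suc (Suc m) := l)"
      have "binary_chain (v(Suc m := 2 * (l div 2))) (Suc m)"
        using binary_chain_snoc[OF v(1)] v(3) by simp
      moreover have "l = Suc (2 * (l div 2))" using False by simp
      ultimately have "binary_chain w (Suc (Suc m))" "w (Suc (Suc m)) = l"
        using binary_chain_snoc[of "v(Suc m := 2 * (l div 2))" "Suc m" l] unfolding w_def by simp_all
      with v(2) p \<open>1 \<le> q\<close> show ?thesis
        by (intro exI[of _ w] exI[of _ "Suc (Suc m)"]) simp
    qed
  qed
qed

lemma binary_chain_mono:
  assumes "binary_chain v m" "1 \<le> i" "i \<le> j" "j \<le> m"
  shows "v i \<le> v j"
  using assms(3,4)
proof (induct j)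
  case (Suc j)
  show ?case
  proof (cases "i = Suc j")
    case False
    with Suc assms(2) have "v i \<le> v j" "1 \<le> j" "j < m" by auto
    moreover from assms(1) \<open>1 \<le> j\<close> \<open>j < m\<close>
    have "v (Suc j) = 2 * v j \<or> v (Suc j) = Suc (v j)" unfolding binary_chain_def by blast
    ultimately show ?thesis by auto
  qed simp
qed simp

definition chain_weight :: "(nat \<Rightarrow> nat) \<Rightarrow> nat \<Rightarrow> nat \<Rightarrow> nat" where
  "chain_weight v m t = (if t = 0 then 0 else if t \<le> m then v t else 1)"

definition chain_partner :: "(nat \<Rightarrow> nat) \<Rightarrow> nat \<Rightarrow> nat" where
  "chain_partner v t = (if v t = 2 * v (t - 1) then t - 1 else 1)"

definition chain_sc :: "(nat \<Rightarrow> nat) \<Rightarrow> nat \<Rightarrow> nat \<Rightarrow> nat \<Rightarrow> nat \<Rightarrow> 'f::field" where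
  "chain_sc v m i j k =
     (if i = 0 then (if j = k then 1 else 0)
      else if j = 0 then (if i = k then 1 else 0)
      else if 2 \<le> k \<and> k \<le> m \<and> i = k - 1 \<and> j = chain_partner v k then 1 else 0)"

lemma chain_partner_range: "2 \<le> t \<Longrightarrow> 0 < chain_partner v t \<and> chain_partner v t < t"
  unfolding chain_partner_def by auto

lemma chain_weight_partner:
  assumes "binary_chain v m" "2 \<le> t" "t \<le> m"
  shows "chain_weight v m (t - 1) + chain_weight v m (chain_partner v t) = chain_weight v m t"
proof -
  have "1 \<le> t - 1" "t - 1 < m" using assms(2,3) by auto
  with assms(1) have "v (Suc (t - 1)) = 2 * v (t - 1) \<or> v (Suc (t - 1)) = Suc (v (t - 1))"
    unfolding binary_chain_def by blast
  moreover have "Suc (t - 1) = t" using assms(2) by simp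
  ultimately show ?thesis
    using assms unfolding binary_chain_def chain_weight_def chain_partner_def by auto
qed

lemma chain_sc_graded:
  assumes chain: "binary_chain v m" and "m < n"
  shows "graded_sc_algebra n (chain_sc v m :: nat \<Rightarrow> nat \<Rightarrow> nat \<Rightarrow> 'f::field)
    (chain_weight v m) (v m)"
proof
  have "1 \<le> m" "v 1 = 1" using chain unfolding binary_chain_def by auto
  show "0 < n" using \<open>m < n\<close> by simp
  show "chain_sc v m 0 j k = (if j = k then 1 else 0)"
    and "chain_sc v m i 0 k = (if i = k then 1 else 0)" for i j k
    unfolding chain_sc_def by simp_all
  show "chain_weight v m 0 = 0" unfolding chain_weight_def by simp
  show "\<exists>t<n. chain_weight v m t = v m"
    using \<open>1 \<le> m\<close> \<open>m < n\<close> by (intro exI[of _ m]) (auto simp: chain_weight_def)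
  show "1 \<le> chain_weight v m t \<and> chain_weight v m t \<le> v m" if "0 < t" "t < n" for t
    using that binary_chain_mono[OF chain, of 1 t] binary_chain_mono[OF chain, of t m]
      binary_chain_mono[OF chain, of 1 m] \<open>1 \<le> m\<close> \<open>v 1 = 1\<close>
    unfolding chain_weight_def by auto
  show "chain_weight v m k = chain_weight v m i + chain_weight v m j"
    if "i < n" "j < n" "k < n" "(chain_sc v m i j k :: 'f) \<noteq> 0" for i j k
    using that(4) chain_weight_partner[OF chain, of k]
    unfolding chain_sc_def by (auto simp: chain_weight_def split: if_splits)
  show "\<exists>a b. 0 < a \<and> a < n \<and> 0 < b \<and> b < n \<and>
      chain_weight v m a + chain_weight v m b = chain_weight v m t \<and>
      sc_mult n (chain_sc v m) (basis_vec a) (basis_vec b) = (basis_vec t :: nat \<Rightarrow> 'f)"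
    if t: "0 < t" "t < n" "2 \<le> chain_weight v m t" for t
  proof -
    have "t \<le> m" using t unfolding chain_weight_def by (auto split: if_splits)
    have "t \<noteq> 1" using t(3) \<open>v 1 = 1\<close> unfolding chain_weight_def by (auto split: if_splits)
    with t(1) have "2 \<le> t" by simp
    define b where "b = chain_partner v t"
    have b: "0 < b" "b < n" using chain_partner_range[OF \<open>2 \<le> t\<close>, of v] t(2) unfolding b_def by auto
    have "sc_mult n (chain_sc v m) (basis_vec (t - 1)) (basis_vec b) =
        (\<lambda>k. if k < n then chain_sc v m (t - 1) b k else 0)"
      using t(2) b(2) by (intro sc_mult_basis_vec) auto
    also have "\<dots> = (basis_vec t :: nat \<Rightarrow> 'f)"
      using \<open>2 \<le> t\<close> \<open>t \<le> m\<close> t(2) b unfolding chain_sc_def basis_vec_def b_def by (auto simp: fun_eq_iff)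
    finally show ?thesis
      using chain_weight_partner[OF chain \<open>2 \<le> t\<close> \<open>t \<le> m\<close>] \<open>2 \<le> t\<close> t(2) b
      unfolding b_def by (intro exI[of _ "t - 1"] exI[of _ "chain_partner v t"]) auto
  qed
qed

theorem proposition4p3:
  fixes n k l :: nat
  assumes "1 < k" and "k < n" and "0 < l" and "l < 2 ^ (n - k)"
    and "ones_count l \<le> k"
  shows "\<exists>c :: nat \<Rightarrow> nat \<Rightarrow> nat \<Rightarrow> 'f::field.
           unital_sc n c \<and> algebra_length_is n c l"
proof -
  obtain v m where chain: "binary_chain v m" and "m < (n - k) + k" and "v m = l"
    using binary_chain_exists[OF assms(3-5)] by blast
  with \<open>k < n\<close> have "m < n" by simp
  then interpret graded_sc_algebra n "chain_sc v m :: nat \<Rightarrow> nat \<Rightarrow> nat \<Rightarrow> 'f" "chain_weight v m" "v m"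
    by (rule chain_sc_graded[OF chain])
  show ?thesis using unital_and_length \<open>v m = l\<close> by blast
qed

end
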